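(* Let $\mathcal{H}$ be a real or complex Hilbert space and let $A$ be a finite-rank positive operator on $\mathcal{H}$ whose trace is an integer $k$. If $k\ge\operatorname{rank}(A)$, then $A$ is the sum of $k$ self-adjoint projections of rank one, i.e. there are unit vectors $x_1,\ldots,x_k\in\mathcal{H}$ with $A=\sum_{i=1}^k x_i\otimes x_i$.
   Context: For $x,y\in\mathcal{H}$, $x\otimes y$ denotes the rank-one operator $u\mapsto\langle u,y\rangle x$; if $\|x\|=1$, $x\otimes x$ is a rank-one orthogonal projection. *)

theory Defs
  imports "HOL-Analysis.Analysis"
begin

text \<open>A Hilbert space over a scalar field 'k (here 'k = real with cj = id, or
  'k = complex with cj = cnj), given by a vector-space scalar multiplication
  smul and an inner product ip, linear in the first and conjugate-linear in the
  second argument.\<close>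

definition ipnorm :: "('a \<Rightarrow> 'a \<Rightarrow> 'k::real_normed_field) \<Rightarrow> 'a \<Rightarrow> real" where
  "ipnorm ip x = sqrt (norm (ip x x))"

definition hilbert_space ::
  "('k::real_normed_field \<Rightarrow> 'k) \<Rightarrow> ('k \<Rightarrow> 'a::ab_group_add \<Rightarrow> 'a) \<Rightarrow> ('a \<Rightarrow> 'a \<Rightarrow> 'k) \<Rightarrow> bool" where
  "hilbert_space cj smul ip \<longleftrightarrow>
     Vector_Spaces.vector_space smul \<and>
     (\<forall>x y z. ip (x + y) z = ip x z + ip y z) \<and>
     (\<forall>c x y. ip (smul c x) y = c * ip x y) \<and>
     (\<forall>x y. ip y x = cj (ip x y)) \<and>
     (\<forall>x. \<exists>r\<ge>0. ip x x = of_real r) \<and>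
     (\<forall>x. ip x x = 0 \<longrightarrow> x = 0) \<and>
     (\<forall>f::nat \<Rightarrow> 'a.
        (\<forall>e>0. \<exists>N. \<forall>m\<ge>N. \<forall>n\<ge>N. ipnorm ip (f m - f n) < e) \<longrightarrow>
        (\<exists>l. \<forall>e>0. \<exists>N. \<forall>n\<ge>N. ipnorm ip (f n - l) < e))"

definition bounded_operator ::
  "('k::real_normed_field \<Rightarrow> 'a::ab_group_add \<Rightarrow> 'a) \<Rightarrow> ('a \<Rightarrow> 'a \<Rightarrow> 'k) \<Rightarrow> ('a \<Rightarrow> 'a) \<Rightarrow> bool" where
  "bounded_operator smul ip A \<longleftrightarrow>
     Vector_Spaces.linear smul smul A \<and> (\<exists>K. \<forall>x. ipnorm ip (A x) \<le> K * ipnorm ip x)"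

definition positive_operator ::
  "('k::real_normed_field \<Rightarrow> 'a::ab_group_add \<Rightarrow> 'a) \<Rightarrow> ('a \<Rightarrow> 'a \<Rightarrow> 'k) \<Rightarrow> ('a \<Rightarrow> 'a) \<Rightarrow> bool" where
  "positive_operator smul ip A \<longleftrightarrow>
     bounded_operator smul ip A \<and>
     (\<forall>x y. ip (A x) y = ip x (A y)) \<and>
     (\<forall>x. \<exists>r\<ge>0. ip (A x) x = of_real r)"

definition finite_rank ::
  "('k::field \<Rightarrow> 'a::ab_group_add \<Rightarrow> 'a) \<Rightarrow> ('a \<Rightarrow> 'a) \<Rightarrow> bool" where
  "finite_rank smul A \<longleftrightarrow> (\<exists>B. finite B \<and> range A \<subseteq> module.span smul B)"

definition op_rank ::
  "('k::field \<Rightarrow> 'a::ab_group_add \<Rightarrow> 'a) \<Rightarrow> ('a \<Rightarrow> 'a) \<Rightarrow> nat" where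
  "op_rank smul A = Vector_Spaces.vector_space.dim smul (range A)"

definition orthonormal_set :: "('a \<Rightarrow> 'a \<Rightarrow> 'k::real_normed_field) \<Rightarrow> 'a set \<Rightarrow> bool" where
  "orthonormal_set ip B \<longleftrightarrow>
     (\<forall>e\<in>B. ip e e = 1) \<and> (\<forall>e\<in>B. \<forall>f\<in>B. e \<noteq> f \<longrightarrow> ip e f = 0)"

text \<open>Trace of a finite-rank operator: sum of the diagonal entries with respect to
  an orthonormal basis of its range (the diagonal entries w.r.t. vectors orthogonal
  to the range vanish for self-adjoint operators).\<close>
definition fr_trace ::
  "('k::real_normed_field \<Rightarrow> 'a::ab_group_add \<Rightarrow> 'a) \<Rightarrow> ('a \<Rightarrow> 'a \<Rightarrow> 'k) \<Rightarrow> ('a \<Rightarrow> 'a) \<Rightarrow> 'k" where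
  "fr_trace smul ip A =
     (\<Sum>e\<in>(SOME B. finite B \<and> orthonormal_set ip B \<and> module.span smul B = range A). ip (A e) e)"

definition rank_one ::
  "('k \<Rightarrow> 'a \<Rightarrow> 'a) \<Rightarrow> ('a \<Rightarrow> 'a \<Rightarrow> 'k) \<Rightarrow> 'a \<Rightarrow> 'a \<Rightarrow> 'a \<Rightarrow> 'a" where
  "rank_one smul ip x y = (\<lambda>u. smul (ip u y) x)"

end

theory Submission
  imports Defs
begin

(* Peeling off the rank-one pieces (A y) \<otimes> (A y) / <A y, y>, each of which lowers the rank,
   writes a positive finite-rank A as a frame operator  \<Sum>i<k. v i \<otimes> v i  of k \<ge> rank A
   vectors from its range.  The trace of such a sum is  \<Sum>i<k. |v i|\<^sup>2, which therefore equals k.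
   A plane rotation of two of the vectors preserves both  v i \<otimes> v i + v j \<otimes> v j  and
   |v i|\<^sup>2 + |v j|\<^sup>2, and if  |v i| \<ge> 1 \<ge> |v j|  some rotation angle makes the first vector a
   unit vector (intermediate value theorem).  Setting it aside and inducting on the number of
   vectors makes all of them unit vectors. *)

locale conjugation =
  fixes cj :: "'k::real_normed_field \<Rightarrow> 'k"
  assumes cj_add: "cj (a + b) = cj a + cj b"
    and cj_mult: "cj (a * b) = cj a * cj b"
    and cj_of_real [simp]: "cj (of_real r) = of_real r"
    and cj_cj [simp]: "cj (cj a) = a"
    and mult_cj: "a * cj a = of_real ((norm a)\<^sup>2)"
begin

lemma cj_zero [simp]: "cj 0 = 0"
  using cj_of_real[of 0] by simp

end

lemma conjugation_id: "conjugation (id :: real \<Rightarrow> real)"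
  by unfold_locales (simp_all add: power2_eq_square)

lemma conjugation_cnj: "conjugation cnj"
proof unfold_locales
  show "a * cnj a = of_real ((norm a)\<^sup>2)" for a :: complex
    by (rule complex_norm_square[symmetric])
qed simp_all

(* Completeness is not assumed: the argument only takes place in the finite-dimensional range
   of the operator. *)
locale inner_product_space = conjugation cj + vs: vector_space smul
  for cj :: "'k::real_normed_field \<Rightarrow> 'k" and smul :: "'k \<Rightarrow> 'a::ab_group_add \<Rightarrow> 'a" +
  fixes ip :: "'a \<Rightarrow> 'a \<Rightarrow> 'k"
  assumes ip_add_left: "ip (x + y) z = ip x z + ip y z"
    and ip_scale_left: "ip (smul c x) y = c * ip x y"
    and ip_conj_sym: "ip y x = cj (ip x y)"
    and ip_self_nonneg: "\<exists>r\<ge>0. ip x x = of_real r"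
    and ip_self_eq_0: "ip x x = 0 \<Longrightarrow> x = 0"

lemma inner_product_space_if_hilbert_space:
  assumes "conjugation cj" and "hilbert_space cj smul ip"
  shows "inner_product_space cj smul ip"
  using assms unfolding hilbert_space_def inner_product_space_def inner_product_space_axioms_def
  by (elim conjE) (intro conjI; (assumption | blast))

lemma (in vector_space) dim_less_if_not_in_span:
  assumes "finite S" "V \<subseteq> span S" "W \<subseteq> V" "x \<in> V" "x \<notin> span W"
  shows "dim W < dim V"
proof -
  obtain C where C: "C \<subseteq> W" "independent C" "W \<subseteq> span C" "card C = dim W"
    by (rule basis_exists)
  obtain D where D: "D \<subseteq> V" "independent D" "V \<subseteq> span D" "card D = dim V"
    by (rule basis_exists)
  have "finite D"
    using independent_span_bound[OF assms(1) D(2)] D(1) assms(2) by auto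
  have "x \<notin> span C"
    using assms(5) span_mono[OF C(1)] by blast
  then have indep: "independent (insert x C)"
    by (rule independent_insertI[OF _ C(2)])
  have "x \<notin> C"
    using \<open>x \<notin> span C\<close> span_base by blast
  have "insert x C \<subseteq> span D"
    using C(1) assms(3,4) D(3) by blast
  then have "finite (insert x C)" and "card (insert x C) \<le> card D"
    using independent_span_bound[OF \<open>finite D\<close> indep] by auto
  then show ?thesis
    using C(4) D(4) \<open>x \<notin> C\<close> by simp
qed

lemma sum_fun_upd_pair:
  fixes v :: "'a \<Rightarrow> 'b" and f :: "'b \<Rightarrow> 'c::comm_monoid_add"
  assumes "finite I" "i \<in> I" "j \<in> I" "i \<noteq> j" "f a + f b = f (v i) + f (v j)"
  shows "(\<Sum>k\<in>I. f ((v(i := a, j := b)) k)) = (\<Sum>k\<in>I. f (v k))"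
proof -
  have split: "sum g I = g i + g j + sum g (I - {i} - {j})" for g :: "'a \<Rightarrow> 'c"
    using assms(1-4) by (simp add: sum.remove[of I i] sum.remove[of "I - {i}" j] add.assoc)
  let ?w = "v(i := a, j := b)"
  have "(\<Sum>k\<in>I. f (?w k)) = f (?w i) + f (?w j) + (\<Sum>k\<in>I - {i} - {j}. f (?w k))"
    by (rule split)
  also have "\<dots> = f a + f b + (\<Sum>k\<in>I - {i} - {j}. f (v k))"
    using assms(4) by simp
  also have "\<dots> = (\<Sum>k\<in>I. f (v k))"
    using assms(5) split[of "\<lambda>k. f (v k)"] by simp
  finally show ?thesis .
qed

context inner_product_space
begin

lemma ip_add_right: "ip x (y + z) = ip x y + ip x z"
  by (metis ip_conj_sym ip_add_left cj_add)

lemma ip_scale_right: "ip x (smul c y) = cj c * ip x y"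
  by (metis ip_conj_sym ip_scale_left cj_mult)

lemma ip_zero_left [simp]: "ip 0 y = 0"
  using ip_scale_left[of 0 0 y] by simp

lemma ip_zero_right [simp]: "ip x 0 = 0"
  using ip_scale_right[of x 0 0] by simp

lemma ip_diff_left: "ip (x - y) z = ip x z - ip y z"
  using ip_add_left[of "x - y" y z] by simp

lemma ip_diff_right: "ip x (y - z) = ip x y - ip x z"
  using ip_add_right[of x "y - z" z] by simp

lemma ip_sum_left: "ip (sum f I) y = (\<Sum>i\<in>I. ip (f i) y)"
  by (induction I rule: infinite_finite_induct) (auto simp: ip_add_left)

lemma ip_sum_right: "ip y (sum f I) = (\<Sum>i\<in>I. ip y (f i))"
  by (induction I rule: infinite_finite_induct) (auto simp: ip_add_right)

lemma ip_eqI: "(\<And>z. ip a z = ip b z) \<Longrightarrow> a = b"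
  using ip_self_eq_0[of "a - b"] by (simp add: ip_diff_left)

definition sqnorm :: "'a \<Rightarrow> real" where
  "sqnorm x = norm (ip x x)"

lemma ip_self_sqnorm: "ip x x = of_real (sqnorm x)"
  using ip_self_nonneg[of x] unfolding sqnorm_def by auto

lemma sqnorm_eq_0_iff: "sqnorm x = 0 \<longleftrightarrow> x = 0"
  using ip_self_eq_0[of x] unfolding sqnorm_def by auto

lemma ipnorm_eq_sqrt_sqnorm: "ipnorm ip x = sqrt (sqnorm x)"
  unfolding ipnorm_def sqnorm_def ..

lemma ip_normalize_self:
  assumes "x \<noteq> 0"
  shows "ip (smul (of_real (1 / sqrt (sqnorm x))) x) (smul (of_real (1 / sqrt (sqnorm x))) x) = 1"
proof -
  define r where "r = 1 / sqrt (sqnorm x)"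
  have "sqnorm x > 0"
    using assms sqnorm_eq_0_iff[of x] unfolding sqnorm_def by simp
  then have "r * r * sqnorm x = 1"
    unfolding r_def by (simp add: field_simps)
  have "ip (smul (of_real r) x) (smul (of_real r) x) = of_real r * of_real r * ip x x"
    by (simp add: ip_scale_left ip_scale_right)
  also have "\<dots> = of_real (r * r * sqnorm x)"
    by (simp add: ip_self_sqnorm)
  also have "\<dots> = 1"
    using \<open>r * r * sqnorm x = 1\<close> by simp
  finally show ?thesis
    unfolding r_def .
qed

lemma sum_ip_orthonormal:
  assumes "finite B" "orthonormal_set ip B" "b \<in> B"
  shows "(\<Sum>b'\<in>B. u b' * ip b' b) = u b"
proof -
  have "(\<Sum>b'\<in>B. u b' * ip b' b) = u b * ip b b + (\<Sum>b'\<in>B - {b}. u b' * ip b' b)"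
    using assms(1,3) by (simp add: sum.remove)
  also have "(\<Sum>b'\<in>B - {b}. u b' * ip b' b) = 0"
    using assms(2,3) unfolding orthonormal_set_def by (intro sum.neutral) auto
  finally show ?thesis
    using assms(2,3) unfolding orthonormal_set_def by simp
qed

lemma orthonormal_expansion:
  assumes "finite B" "orthonormal_set ip B" "x \<in> vs.span B"
  shows "x = (\<Sum>b\<in>B. smul (ip x b) b)"
proof -
  obtain u where u: "x = (\<Sum>b\<in>B. smul (u b) b)"
    using assms(3) vs.span_finite[OF assms(1)] by auto
  have "ip x b = u b" if "b \<in> B" for b
    using sum_ip_orthonormal[OF assms(1,2) that] unfolding u by (simp add: ip_sum_left ip_scale_left)
  then show ?thesis
    using u by (metis (no_types, lifting) sum.cong)
qed

lemma parseval:
  assumes "finite B" "orthonormal_set ip B" "x \<in> vs.span B"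
  shows "ip x x = (\<Sum>b\<in>B. ip x b * ip b x)"
  by (subst (1) orthonormal_expansion[OF assms]) (simp add: ip_sum_left ip_scale_left)

lemma orthonormal_insert:
  assumes "finite B" "orthonormal_set ip B"
  obtains B' where "finite B'" "orthonormal_set ip B'" "vs.span B' = vs.span (insert x B)"
proof (cases "x \<in> vs.span B")
  case True
  then have "vs.span (insert x B) = vs.span B"
    by (metis insert_subset vs.span_eq vs.span_superset)
  then show ?thesis
    using assms that by metis
next
  case False
  define p where "p = (\<Sum>b\<in>B. smul (ip x b) b)"
  define y where "y = x - p"
  define e where "e = smul (of_real (1 / sqrt (sqnorm y))) y"
  have p: "p \<in> vs.span B"
    unfolding p_def by (intro vs.span_sum vs.span_scale vs.span_base)
  then have "y \<noteq> 0"
    using False unfolding y_def by auto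
  have "ip y b = 0" if "b \<in> B" for b
    using sum_ip_orthonormal[OF assms that, of "ip x"]
    unfolding y_def p_def by (simp add: ip_diff_left ip_sum_left ip_scale_left)
  then have eB: "ip e b = 0" if "b \<in> B" for b
    using that unfolding e_def by (simp add: ip_scale_left)
  then have "ip b e = 0" if "b \<in> B" for b
    using that ip_conj_sym[of b e] by simp
  moreover note eB
  moreover have "ip e e = 1"
    unfolding e_def using ip_normalize_self[OF \<open>y \<noteq> 0\<close>] .
  ultimately have "orthonormal_set ip (insert e B)"
    using assms(2) unfolding orthonormal_set_def by auto
  moreover have "vs.span (insert e B) = vs.span (insert x B)"
  proof -
    have "sqrt (sqnorm y) \<noteq> 0"
      using \<open>y \<noteq> 0\<close> sqnorm_eq_0_iff by simp
    then have "of_real (sqrt (sqnorm y)) * of_real (1 / sqrt (sqnorm y)) = (1 :: 'k)"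
      by simp
    then have "x = smul (of_real (sqrt (sqnorm y))) e + p"
      unfolding e_def y_def by (simp add: vs.scale_scale)
    moreover have "p \<in> vs.span (insert e B)" "p \<in> vs.span (insert x B)"
      using p vs.span_mono[OF subset_insertI] by blast+
    ultimately have "x \<in> vs.span (insert e B)"
      by (simp add: vs.span_add vs.span_scale vs.span_base)
    moreover have "e \<in> vs.span (insert x B)"
      unfolding e_def y_def using \<open>p \<in> vs.span (insert x B)\<close>
      by (simp add: vs.span_diff vs.span_scale vs.span_base)
    ultimately show ?thesis
      unfolding vs.span_eq by (auto intro: vs.span_base)
  qed
  ultimately show ?thesis
    using assms(1) that by blast
qed

lemma orthonormal_span_exists:
  assumes "finite S"
  shows "\<exists>B. finite B \<and> orthonormal_set ip B \<and> vs.span B = vs.span S"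
  using assms
proof (induction S rule: finite_induct)
  case empty
  show ?case
    by (intro exI[of _ "{}"]) (auto simp: orthonormal_set_def)
next
  case (insert x S)
  then obtain B where "finite B" "orthonormal_set ip B" "vs.span B = vs.span S"
    by blast
  then show ?case
    using orthonormal_insert[of B x] by (metis vs.span_insert)
qed

lemma orthonormal_basis_of_subspace:
  assumes "vs.subspace V" "finite S" "V \<subseteq> vs.span S"
  shows "\<exists>B. finite B \<and> orthonormal_set ip B \<and> vs.span B = V"
proof -
  obtain C where C: "C \<subseteq> V" "vs.independent C" "V \<subseteq> vs.span C"
    by (rule vs.basis_exists)
  then have "finite C"
    using vs.independent_span_bound[OF assms(2) C(2)] assms(3) by auto
  moreover have "vs.span C = V"
    using vs.span_subspace[OF C(1,3) assms(1)] .
  ultimately show ?thesis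
    using orthonormal_span_exists by blast
qed

definition selfadjoint :: "('a \<Rightarrow> 'a) \<Rightarrow> bool" where
  "selfadjoint A \<longleftrightarrow> (\<forall>x y. ip (A x) y = ip x (A y))"

definition positive_semidef :: "('a \<Rightarrow> 'a) \<Rightarrow> bool" where
  "positive_semidef A \<longleftrightarrow> (\<forall>x. \<exists>r\<ge>0. ip (A x) x = of_real r)"

definition frame_operator :: "('b \<Rightarrow> 'a) \<Rightarrow> 'b set \<Rightarrow> 'a \<Rightarrow> 'a" where
  "frame_operator v I = (\<lambda>u. \<Sum>i\<in>I. rank_one smul ip (v i) (v i) u)"

lemma selfadjoint_add: "selfadjoint A \<Longrightarrow> A (x + y) = A x + A y"
  by (rule ip_eqI) (simp add: selfadjoint_def ip_add_left)

lemma selfadjoint_scale: "selfadjoint A \<Longrightarrow> A (smul c x) = smul c (A x)"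
  by (rule ip_eqI) (simp add: selfadjoint_def ip_scale_left)

lemma selfadjoint_diff: "selfadjoint A \<Longrightarrow> A (x - y) = A x - A y"
  by (rule ip_eqI) (simp add: selfadjoint_def ip_diff_left)

lemma selfadjoint_range_subspace:
  assumes "selfadjoint A"
  shows "vs.subspace (range A)"
proof -
  have "0 \<in> range A"
    using selfadjoint_diff[OF assms, of 0 0] by (metis diff_self rangeI)
  moreover have "A x + A y \<in> range A" for x y
    using selfadjoint_add[OF assms, of x y] by (metis rangeI)
  moreover have "smul c (A x) \<in> range A" for c x
    using selfadjoint_scale[OF assms, of c x] by (metis rangeI)
  ultimately show ?thesis
    unfolding vs.subspace_def by auto
qed

lemma selfadjoint_rank_one: "selfadjoint (rank_one smul ip v v)"
  unfolding selfadjoint_def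
proof (intro allI)
  fix x y
  have "cj (ip y v) = ip v y"
    by (rule ip_conj_sym[symmetric])
  then show "ip (rank_one smul ip v v x) y = ip x (rank_one smul ip v v y)"
    by (simp add: rank_one_def ip_scale_left ip_scale_right mult.commute)
qed

lemma selfadjoint_minus: "selfadjoint A \<Longrightarrow> selfadjoint B \<Longrightarrow> selfadjoint (\<lambda>u. A u - B u)"
  by (simp add: selfadjoint_def ip_diff_left ip_diff_right)

lemma selfadjoint_frame_operator: "selfadjoint (frame_operator v I)"
  using selfadjoint_rank_one unfolding selfadjoint_def frame_operator_def
  by (simp add: ip_sum_left ip_sum_right)

lemma positive_semidef_form_eq_0:
  assumes sa: "selfadjoint A" and psd: "positive_semidef A" and "ip (A e) e = 0"
  shows "A e = 0"
proof (rule ip_eqI)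
  fix z
  define c where "c = ip (A z) e"
  have Aez: "ip (A e) z = cj c"
    using sa ip_conj_sym[of e "A z"] unfolding selfadjoint_def c_def by simp
  show "ip (A e) z = ip 0 z"
  proof (rule ccontr)
    assume "ip (A e) z \<noteq> ip 0 z"
    then have "c \<noteq> 0"
      using Aez by auto
    define m where "m = (norm c)\<^sup>2"
    have "m > 0" and c_cj: "c * cj c = of_real m"
      using \<open>c \<noteq> 0\<close> mult_cj unfolding m_def by simp_all
    obtain R where R: "ip (A z) z = of_real R"
      using psd unfolding positive_semidef_def by blast
    \<comment> \<open>moving \<open>z\<close> along \<open>e\<close> lowers the form by an arbitrarily large multiple of \<open>|c|\<^sup>2\<close>\<close>
    define s where "s = (R + 1) / (2 * m)"
    define w where "w = z - smul (of_real s * c) e"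
    have "ip (A w) w = ip (A z) z - cj (of_real s * c) * ip (A z) e
       - (of_real s * c) * (ip (A e) z - cj (of_real s * c) * ip (A e) e)"
      unfolding w_def using sa
      by (simp add: selfadjoint_diff selfadjoint_scale ip_diff_left ip_diff_right ip_scale_left ip_scale_right)
        (simp add: algebra_simps)
    also have "\<dots> = of_real R - of_real s * (cj c * c) - of_real s * (c * cj c)"
      using assms(3) Aez R by (simp add: cj_mult c_def algebra_simps)
    also have "\<dots> = of_real (R - 2 * s * m)"
      using c_cj by (simp add: mult.commute[of "cj c" c] algebra_simps)
    also have "R - 2 * s * m = -1"
      unfolding s_def using \<open>m > 0\<close> by (simp add: field_simps)
    finally have "ip (A w) w = of_real (-1)" .
    moreover obtain r where "r \<ge> 0" "ip (A w) w = of_real r"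
      using psd unfolding positive_semidef_def by blast
    ultimately have "(of_real r :: 'k) = of_real (-1)"
      by simp
    then show False
      using \<open>r \<ge> 0\<close> by (simp only: of_real_eq_iff)
  qed
qed

lemma positive_semidef_form_pos:
  assumes "selfadjoint A" "positive_semidef A" "A y \<noteq> 0"
  shows "\<exists>\<alpha>>0. ip (A y) y = of_real \<alpha>"
proof -
  obtain r where "r \<ge> 0" "ip (A y) y = of_real r"
    using assms(2) unfolding positive_semidef_def by blast
  moreover have "r \<noteq> 0"
    using positive_semidef_form_eq_0[OF assms(1,2)] assms(3) calculation(2) by auto
  ultimately show ?thesis
    by auto
qed

lemma rank_one_deflation:
  assumes sa: "selfadjoint A" and psd: "positive_semidef A"
    and \<alpha>: "ip (A y) y = of_real \<alpha>" "\<alpha> > 0"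
  defines "v \<equiv> smul (of_real (1 / sqrt \<alpha>)) (A y)"
  defines "A' \<equiv> \<lambda>u. A u - rank_one smul ip v v u"
  shows "selfadjoint A'" and "positive_semidef A'" and "range A' \<subseteq> range A"
    and "v \<in> range A" and "v \<notin> vs.span (range A')"
proof -
  define t where "t u = ip u (A y) / of_real \<alpha>" for u
  define c :: 'k where "c = of_real (1 / sqrt \<alpha>)"
  have "c * c = of_real (1 / sqrt \<alpha> * (1 / sqrt \<alpha>))"
    unfolding c_def by (rule of_real_mult[symmetric])
  also have "1 / sqrt \<alpha> * (1 / sqrt \<alpha>) = 1 / \<alpha>"
    using \<alpha>(2) by simp
  finally have "c * c = 1 / of_real \<alpha>"
    by simp
  then have "c * ip u (A y) * c = t u" for u
    unfolding t_def by (metis mult.commute mult.assoc times_divide_eq_right mult_1_right)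
  moreover have "rank_one smul ip v v u = smul (c * ip u (A y) * c) (A y)" for u
    unfolding rank_one_def v_def c_def by (simp only: ip_scale_right cj_of_real vs.scale_scale)
  ultimately have "rank_one smul ip v v u = smul (t u) (A y)" for u
    by simp
  then have A': "A' u = A (u - smul (t u) y)" for u
    unfolding A'_def using sa by (simp add: selfadjoint_diff selfadjoint_scale)
  have orth: "ip (A' u) y = 0" for u
  proof -
    have "ip (A' u) y = ip u (A y) - t u * of_real \<alpha>"
      unfolding A' using sa \<alpha>(1)
      by (simp add: selfadjoint_diff selfadjoint_scale ip_diff_left ip_scale_left selfadjoint_def)
    then show ?thesis
      unfolding t_def using \<alpha>(2) by simp
  qed
  show "selfadjoint A'"
    unfolding A'_def by (intro selfadjoint_minus sa selfadjoint_rank_one)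
  show "range A' \<subseteq> range A"
    using A' by auto
  show "v \<in> range A"
    unfolding v_def using selfadjoint_scale[OF sa] by (metis rangeI)
  show "positive_semidef A'"
    unfolding positive_semidef_def
  proof
    fix u
    have "ip (A' u) u = ip (A' u) (u - smul (t u) y)"
      using orth by (simp add: ip_diff_right ip_scale_right)
    then show "\<exists>r\<ge>0. ip (A' u) u = of_real r"
      using psd unfolding positive_semidef_def A' by metis
  qed
  have "vs.span (range A') \<subseteq> {z. ip z y = 0}"
    using orth by (intro vs.span_minimal) (auto simp: vs.subspace_def ip_add_left ip_scale_left)
  moreover have "ip v y \<noteq> 0"
    unfolding v_def using \<alpha> by (simp add: ip_scale_left)
  ultimately show "v \<notin> vs.span (range A')"
    by blast
qed

lemma positive_semidef_eq_frame_operator: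
  assumes "selfadjoint A" "positive_semidef A" "finite S" "range A \<subseteq> vs.span S"
    and "vs.dim (range A) \<le> n"
  shows "\<exists>v. (\<forall>i<n. v i \<in> range A) \<and> A = frame_operator v {..<n}"
  using assms(1,2,4,5)
proof (induction n arbitrary: A rule: less_induct)
  case (less n)
  show ?case
  proof (cases "\<forall>u. A u = 0")
    case True
    then have "A = frame_operator (\<lambda>_. 0) {..<n}" and "0 \<in> range A"
      by (auto simp: frame_operator_def rank_one_def)
    then show ?thesis
      by (intro exI[of _ "\<lambda>_. 0"]) simp
  next
    case False
    then obtain y \<alpha> where \<alpha>: "ip (A y) y = of_real \<alpha>" "\<alpha> > 0"
      using positive_semidef_form_pos[OF less.prems(1,2)] by blast
    define v where "v = smul (of_real (1 / sqrt \<alpha>)) (A y)"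
    define A' where "A' = (\<lambda>u. A u - rank_one smul ip v v u)"
    note deflation = rank_one_deflation[OF less.prems(1,2) \<alpha>, folded v_def, folded A'_def]
    have "vs.dim (range A') < vs.dim (range A)"
      by (rule vs.dim_less_if_not_in_span[OF assms(3) less.prems(3) deflation(3-5)])
    then obtain m where n: "n = Suc m" and "vs.dim (range A') \<le> m"
      using less.prems(4) by (cases n) auto
    then obtain v' where v': "\<forall>i<m. v' i \<in> range A'" "A' = frame_operator v' {..<m}"
      using less.IH[of m A'] deflation(1-3) less.prems(3) by blast
    define w where "w = v'(m := v)"
    have "\<forall>i<n. w i \<in> range A"
      using v'(1) deflation(3,4) unfolding n w_def by (auto simp: less_Suc_eq)
    moreover have "A u = frame_operator w {..<n} u" for u
    proof -
      have "frame_operator w {..<n} u = frame_operator v' {..<m} u + rank_one smul ip v v u"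
        unfolding n frame_operator_def w_def by simp
      then show ?thesis
        using v'(2) unfolding A'_def by (metis diff_add_cancel)
    qed
    ultimately show ?thesis
      by blast
  qed
qed

lemma fr_trace_frame_operator:
  assumes "finite I" "\<forall>i\<in>I. v i \<in> range (frame_operator v I)"
  shows "fr_trace smul ip (frame_operator v I) = (\<Sum>i\<in>I. ip (v i) (v i))"
proof -
  let ?A = "frame_operator v I"
  have "?A u \<in> vs.span (v ` I)" for u
    unfolding frame_operator_def rank_one_def
    by (intro vs.span_sum vs.span_scale vs.span_base imageI)
  then have "range ?A \<subseteq> vs.span (v ` I)"
    by blast
  then have ex_basis: "\<exists>B. finite B \<and> orthonormal_set ip B \<and> vs.span B = range ?A"
    by (rule orthonormal_basis_of_subspace[OF selfadjoint_range_subspace[OF selfadjoint_frame_operator]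
          finite_imageI[OF assms(1)]])
  define B where "B = (SOME B. finite B \<and> orthonormal_set ip B \<and> vs.span B = range ?A)"
  have B: "finite B" "orthonormal_set ip B" "vs.span B = range ?A"
    using someI_ex[OF ex_basis] unfolding B_def by auto
  have trace: "fr_trace smul ip ?A = (\<Sum>b\<in>B. ip (?A b) b)"
    unfolding fr_trace_def B_def by simp
  have "(\<Sum>b\<in>B. ip (?A b) b) = (\<Sum>b\<in>B. \<Sum>i\<in>I. ip (v i) b * ip b (v i))"
    by (simp add: frame_operator_def rank_one_def ip_sum_left ip_scale_left mult.commute)
  also have "\<dots> = (\<Sum>i\<in>I. \<Sum>b\<in>B. ip (v i) b * ip b (v i))"
    by (rule sum.swap)
  also have "\<dots> = (\<Sum>i\<in>I. ip (v i) (v i))"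
    using parseval[OF B(1,2)] assms(2) B(3) by simp
  finally show ?thesis
    using trace by simp
qed

lemma ip_self_lincomb:
  "ip (smul (of_real c) x + smul (of_real s) y) (smul (of_real c) x + smul (of_real s) y)
   = of_real (c\<^sup>2) * ip x x + of_real (c * s) * (ip x y + ip y x) + of_real (s\<^sup>2) * ip y y"
  by (simp add: ip_add_left ip_add_right ip_scale_left ip_scale_right power2_eq_square algebra_simps)

lemma rotation_sqnorm:
  assumes "c\<^sup>2 + s\<^sup>2 = 1"
  shows "sqnorm (smul (of_real c) x + smul (of_real s) y) + sqnorm (smul (of_real (- s)) x + smul (of_real c) y)
       = sqnorm x + sqnorm y"
proof -
  have "(of_real (sqnorm (smul (of_real c) x + smul (of_real s) y)
      + sqnorm (smul (of_real (- s)) x + smul (of_real c) y)) :: 'k)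
      = of_real (c\<^sup>2) * ip x x + of_real (c * s) * (ip x y + ip y x) + of_real (s\<^sup>2) * ip y y
      + (of_real ((- s)\<^sup>2) * ip x x + of_real (- s * c) * (ip x y + ip y x) + of_real (c\<^sup>2) * ip y y)"
    by (simp only: of_real_add ip_self_sqnorm[symmetric] ip_self_lincomb)
  also have "\<dots> = of_real (c\<^sup>2 + s\<^sup>2) * (ip x x + ip y y)"
    by (simp add: algebra_simps)
  also have "\<dots> = of_real (sqnorm x + sqnorm y)"
    using assms by (simp add: ip_self_sqnorm)
  finally show ?thesis
    by (simp only: of_real_eq_iff)
qed

lemma rotation_rank_one:
  fixes c s :: real and x y :: 'a
  assumes "c\<^sup>2 + s\<^sup>2 = 1"
  defines "x' \<equiv> smul (of_real c) x + smul (of_real s) y"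
    and "y' \<equiv> smul (of_real (- s)) x + smul (of_real c) y"
  shows "rank_one smul ip x' x' u + rank_one smul ip y' y' u
       = rank_one smul ip x x u + rank_one smul ip y y u"
proof -
  define C S :: 'k where "C = of_real c" and "S = of_real s"
  have CS: "C * C + S * S = 1"
    using arg_cong[OF assms(1), of "of_real :: real \<Rightarrow> 'k"] unfolding C_def S_def
    by (simp add: power2_eq_square)
  have x': "x' = smul C x + smul S y" and y': "y' = smul (- S) x + smul C y"
    unfolding x'_def y'_def C_def S_def by simp_all
  have expand: "rank_one smul ip x' x' u + rank_one smul ip y' y' u
      = smul (ip u x' * C + ip u y' * - S) x + smul (ip u x' * S + ip u y' * C) y"
  proof -
    have "smul a x' = smul (a * C) x + smul (a * S) y"
      and "smul a y' = smul (a * - S) x + smul (a * C) y" for a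
      unfolding x' y' by (simp_all only: vs.scale_right_distrib vs.scale_scale)
    then show ?thesis
      unfolding rank_one_def by (simp only: vs.scale_left_distrib add_ac)
  qed
  have ip_x': "ip u x' = C * ip u x + S * ip u y" and ip_y': "ip u y' = - S * ip u x + C * ip u y"
    unfolding x' y' by (simp_all add: ip_add_right ip_diff_right ip_scale_right C_def S_def)
  have "ip u x' * C + ip u y' * - S = ip u x * (C * C + S * S)"
    and "ip u x' * S + ip u y' * C = ip u y * (C * C + S * S)"
    unfolding ip_x' ip_y' by (simp_all add: algebra_simps)
  then show ?thesis
    using expand CS by (simp add: rank_one_def)
qed

lemma exists_unit_rotation:
  assumes "sqnorm y \<le> 1" "1 \<le> sqnorm x"
  obtains c s where "c\<^sup>2 + s\<^sup>2 = 1" "sqnorm (smul (of_real c) x + smul (of_real s) y) = 1"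
proof -
  define f where "f t = sqnorm (smul (of_real (cos t)) x + smul (of_real (sin t)) y)" for t
  have "isCont f t" for t
    unfolding f_def sqnorm_def ip_self_lincomb by (intro continuous_intros)
  moreover have "f 0 = sqnorm x" "f (pi / 2) = sqnorm y"
    unfolding f_def by simp_all
  ultimately obtain t where "f t = 1"
    using IVT2[of f "pi / 2" 1 0] assms by auto
  then show thesis
    using that[of "cos t" "sin t"] unfolding f_def by simp
qed

lemma frame_operator_remove:
  "finite I \<Longrightarrow> i \<in> I \<Longrightarrow>
    frame_operator v I u = rank_one smul ip (v i) (v i) u + frame_operator v (I - {i}) u"
  unfolding frame_operator_def by (rule sum.remove)

lemma frame_operator_cong: "(\<And>i. i \<in> I \<Longrightarrow> v i = w i) \<Longrightarrow> frame_operator v I = frame_operator w I"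
  unfolding frame_operator_def by simp

lemma frame_operator_normalize_one:
  assumes "finite I" "I \<noteq> {}" "(\<Sum>k\<in>I. sqnorm (v k)) = card I"
  obtains i w where "i \<in> I" "sqnorm (w i) = 1" "frame_operator w I = frame_operator v I"
    "(\<Sum>k\<in>I. sqnorm (w k)) = card I"
proof -
  have "\<exists>i\<in>I. 1 \<le> sqnorm (v i)"
  proof (rule ccontr)
    assume "\<not> ?thesis"
    then have "(\<Sum>k\<in>I. sqnorm (v k)) < (\<Sum>k\<in>I. 1)"
      using assms(1,2) by (intro sum_strict_mono) auto
    then show False
      using assms(3) by simp
  qed
  moreover have "\<exists>j\<in>I. sqnorm (v j) \<le> 1"
  proof (rule ccontr)
    assume "\<not> ?thesis"
    then have "(\<Sum>k\<in>I. 1) < (\<Sum>k\<in>I. sqnorm (v k))"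
      using assms(1,2) by (intro sum_strict_mono) auto
    then show False
      using assms(3) by simp
  qed
  ultimately obtain i j where i: "i \<in> I" "1 \<le> sqnorm (v i)" and j: "j \<in> I" "sqnorm (v j) \<le> 1"
    by blast
  show thesis
  proof (cases "i = j")
    case True
    then show thesis
      using that[of i v] i j assms(3) by simp
  next
    case False
    obtain c s where cs: "c\<^sup>2 + s\<^sup>2 = 1"
      and unit: "sqnorm (smul (of_real c) (v i) + smul (of_real s) (v j)) = 1"
      using exists_unit_rotation[OF j(2) i(2)] by blast
    define w where "w = v(i := smul (of_real c) (v i) + smul (of_real s) (v j),
                          j := smul (of_real (- s)) (v i) + smul (of_real c) (v j))"
    have "sqnorm (w i) = 1"
      using unit False by (simp add: w_def)
    moreover have "frame_operator w I = frame_operator v I"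
      unfolding frame_operator_def w_def
      using sum_fun_upd_pair[OF assms(1) i(1) j(1) False, where f = "\<lambda>z. rank_one smul ip z z _"]
        rotation_rank_one[OF cs] by simp
    moreover have "(\<Sum>k\<in>I. sqnorm (w k)) = card I"
      unfolding w_def using sum_fun_upd_pair[OF assms(1) i(1) j(1) False, where f = sqnorm]
        rotation_sqnorm[OF cs] assms(3) by simp
    ultimately show thesis
      using that i(1) by blast
  qed
qed

lemma frame_operator_unit_vectors:
  assumes "finite I" "(\<Sum>i\<in>I. sqnorm (v i)) = card I"
  shows "\<exists>w. (\<forall>i\<in>I. sqnorm (w i) = 1) \<and> frame_operator w I = frame_operator v I"
  using assms
proof (induction "card I" arbitrary: I v)
  case 0
  then show ?case
    by auto
next
  case (Suc n)
  then obtain i w where i: "i \<in> I" "sqnorm (w i) = 1"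
    and w: "frame_operator w I = frame_operator v I" "(\<Sum>k\<in>I. sqnorm (w k)) = card I"
    using frame_operator_normalize_one[of I v] by force
  have "card (I - {i}) = n"
    using Suc.hyps(2) i(1) by simp
  moreover have "(\<Sum>k\<in>I - {i}. sqnorm (w k)) = card (I - {i})"
    using w(2) i Suc.prems(1) Suc.hyps(2) by (simp add: sum_diff1)
  ultimately obtain w' where w': "\<forall>k\<in>I - {i}. sqnorm (w' k) = 1"
    "frame_operator w' (I - {i}) = frame_operator w (I - {i})"
    using Suc.hyps(1) Suc.prems(1) by blast
  define u where "u = w'(i := w i)"
  have "\<forall>k\<in>I. sqnorm (u k) = 1"
    using w'(1) i by (simp add: u_def)
  moreover have "frame_operator u I = frame_operator v I"
  proof
    fix z
    have "frame_operator u (I - {i}) = frame_operator w' (I - {i})"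
      by (rule frame_operator_cong) (simp add: u_def)
    then have "frame_operator u I z = rank_one smul ip (w i) (w i) z + frame_operator w (I - {i}) z"
      using frame_operator_remove[OF Suc.prems(1) i(1), of u z] w'(2) by (simp add: u_def)
    also have "\<dots> = frame_operator v I z"
      using frame_operator_remove[OF Suc.prems(1) i(1), of w z] w(1) by simp
    finally show "frame_operator u I z = frame_operator v I z" .
  qed
  ultimately show ?case
    by blast
qed

lemma positive_finite_rank_eq_sum_unit_rank_ones:
  assumes pos: "positive_operator smul ip A" and fr: "finite_rank smul A"
    and tr: "fr_trace smul ip A = of_nat k" and rk: "op_rank smul A \<le> k"
  shows "\<exists>x. (\<forall>i<k. ipnorm ip (x i) = 1) \<and> (\<forall>u. A u = (\<Sum>i<k. rank_one smul ip (x i) (x i) u))"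
proof -
  have "selfadjoint A" "positive_semidef A"
    using pos unfolding positive_operator_def selfadjoint_def positive_semidef_def by blast+
  moreover obtain S where "finite S" "range A \<subseteq> vs.span S"
    using fr unfolding finite_rank_def by blast
  ultimately obtain v where v: "\<forall>i<k. v i \<in> range A" "A = frame_operator v {..<k}"
    using positive_semidef_eq_frame_operator rk unfolding op_rank_def by blast
  have "of_nat k = fr_trace smul ip (frame_operator v {..<k})"
    using tr v(2) by simp
  also have "\<dots> = of_real (\<Sum>i<k. sqnorm (v i))"
    using fr_trace_frame_operator[of "{..<k}" v] v by (simp add: ip_self_sqnorm)
  finally have "(\<Sum>i<k. sqnorm (v i)) = card {..<k}"
    by (metis of_real_eq_iff of_real_of_nat_eq card_lessThan)
  then obtain w where "\<forall>i<k. sqnorm (w i) = 1" "frame_operator w {..<k} = A"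
    using frame_operator_unit_vectors[of "{..<k}" v] v(2) by auto
  then show ?thesis
    by (intro exI[of _ w]) (auto simp: ipnorm_eq_sqrt_sqnorm frame_operator_def)
qed

end

theorem proposition6:
  shows
  "(\<forall>(smul :: real \<Rightarrow> 'a::ab_group_add \<Rightarrow> 'a) ip A (k::nat).
      hilbert_space id smul ip \<and> positive_operator smul ip A \<and> finite_rank smul A \<and>
      fr_trace smul ip A = of_nat k \<and> k \<ge> op_rank smul A \<longrightarrow>
      (\<exists>x :: nat \<Rightarrow> 'a. (\<forall>i<k. ipnorm ip (x i) = 1) \<and>
         (\<forall>u. A u = (\<Sum>i<k. rank_one smul ip (x i) (x i) u)))) \<and>
   (\<forall>(smul :: complex \<Rightarrow> 'b::ab_group_add \<Rightarrow> 'b) ip A (k::nat).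
      hilbert_space cnj smul ip \<and> positive_operator smul ip A \<and> finite_rank smul A \<and>
      fr_trace smul ip A = of_nat k \<and> k \<ge> op_rank smul A \<longrightarrow>
      (\<exists>x :: nat \<Rightarrow> 'b. (\<forall>i<k. ipnorm ip (x i) = 1) \<and>
         (\<forall>u. A u = (\<Sum>i<k. rank_one smul ip (x i) (x i) u))))"
  using inner_product_space.positive_finite_rank_eq_sum_unit_rank_ones
    [OF inner_product_space_if_hilbert_space[OF conjugation_id]]
    inner_product_space.positive_finite_rank_eq_sum_unit_rank_ones
    [OF inner_product_space_if_hilbert_space[OF conjugation_cnj]]
  by blast

end
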